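(* Let $M,N,d_f,d_t$ be positive integers with $d_f\mid M$ and $d_t\mid N$, with $N/(2d_t)$ an integer, and let $T>0$, $\Delta f>0$. Consider a doubly selective channel with $P$ paths having complex gains $h_1,\dots,h_P$, delays $\tau_1,\dots,\tau_P\ge 0$ and Dopplers $\nu_1,\dots,\nu_P\in\mathbb{R}$, and set $l_i=M\Delta f\,\tau_i$, $k_i=NT\,\nu_i$. Define, for all integers $k,l$, the original CSF $$h_{\rm DD}[k,l]=\sum_{i=1}^P h_i\sum_{m=0}^{M-1}\frac{1}{\sqrt M}e^{-j2\pi m\frac{l_i-l}{M}}\sum_{n=0}^{N-1}\frac{1}{\sqrt N}e^{j2\pi n\frac{k_i-k}{N}},$$ and the periodic CSF obtained from pilots on the lattice $m\in\{0,d_f,2d_f,\dots\}$, $n\in\{0,d_t,2d_t,\dots\}$, $$h^{\rm Periodic}_{\rm DD}[k,l]=\sum_{i=1}^P h_i\sum_{m'=0}^{M/d_f-1}\frac{1}{\sqrt{\tilde M}}e^{-j2\pi m' d_f\frac{l_i-l}{M}}\sum_{n'=0}^{N/d_t-1}\frac{1}{\sqrt{\tilde N}}e^{j2\pi n' d_t\frac{k_i-k}{N}},$$ with $\tilde M=M/d_f^2$ and $\tilde N=N/d_t^2$. Suppose (i) every delay and Doppler is on-grid, i.e. $l_i\in\mathbb{Z}$ and $k_i\in\mathbb{Z}$ (resolutions $\frac{1}{M\Delta f}$ and $\frac{1}{NT}$), and (ii) $\nu_i\in\left[-\frac{1}{2d_tT},\frac{1}{2d_tT}-\frac{1}{NT}\right]$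 and $\tau_i\in\left[0,\frac{1}{d_f\Delta f}-\frac{1}{M\Delta f}\right]$ for all $i$. Then for all $k\in\{-\frac{N}{2d_t},-\frac{N}{2d_t}+1,\dots,\frac{N}{2d_t}-1\}$ and all $l\in\{0,1,\dots,\frac{M}{d_f}-1\}$, $h^{\rm Periodic}_{\rm DD}[k,l]=h_{\rm DD}[k,l]$, i.e. one period of the periodic CSF exactly represents the original CSF.
   Context: Setting: OFDM with $N$ symbols of duration $T$ and $M$ subcarriers of spacing $\Delta f$; the sampled channel transfer function is $h_{\rm TF}[m,n]=\sum_{i=1}^P h_i e^{j2\pi\nu_i nT}e^{-j2\pi\tau_i m\Delta f}$, and the CSF $h_{\rm DD}$ is its DFT along time ($n$) and inverse DFT along frequency ($m$), as written explicitly in the claim. The periodic CSF is the same transform applied to the CTF sampled only at pilot positions $m\in\{0,d_f,\dots,M-d_f\}$, $n\in\{0,d_t,\dots,N-d_t\}$ (zero elsewhere), with scaling factors $\tilde M,\tilde N$ as given; it is periodic with periods $N/d_t$ in $k$ and $M/d_f$ in $l$. Here $j=\sqrt{-1}$. *)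

theory Defs
  imports "HOL-Analysis.Analysis"
begin

definition delay_idx :: "nat \<Rightarrow> real \<Rightarrow> real \<Rightarrow> real" where
  "delay_idx M df_sp tau_i = real M * df_sp * tau_i"

definition doppler_idx :: "nat \<Rightarrow> real \<Rightarrow> real \<Rightarrow> real" where
  "doppler_idx N T nu_i = real N * T * nu_i"

definition hDD ::
  "nat \<Rightarrow> nat \<Rightarrow> real \<Rightarrow> real \<Rightarrow> nat \<Rightarrow> (nat \<Rightarrow> complex) \<Rightarrow> (nat \<Rightarrow> real)
   \<Rightarrow> (nat \<Rightarrow> real) \<Rightarrow> int \<Rightarrow> int \<Rightarrow> complex" where
  "hDD M N Df T P h tau nu k l =
    (\<Sum>i\<in>{1..P}. h i *
      (\<Sum>m<M. (1 / complex_of_real (sqrt (real M))) *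
         exp (- (2 * pi * \<i>) * complex_of_real (real m * (delay_idx M Df (tau i) - real_of_int l) / real M))) *
      (\<Sum>n<N. (1 / complex_of_real (sqrt (real N))) *
         exp ((2 * pi * \<i>) * complex_of_real (real n * (doppler_idx N T (nu i) - real_of_int k) / real N))))"

definition hDD_periodic ::
  "nat \<Rightarrow> nat \<Rightarrow> nat \<Rightarrow> nat \<Rightarrow> real \<Rightarrow> real \<Rightarrow> nat \<Rightarrow> (nat \<Rightarrow> complex) \<Rightarrow> (nat \<Rightarrow> real)
   \<Rightarrow> (nat \<Rightarrow> real) \<Rightarrow> int \<Rightarrow> int \<Rightarrow> complex" where
  "hDD_periodic M N d_f d_t Df T P h tau nu k l =
    (let Mt = real M / (real d_f)^2; Nt = real N / (real d_t)^2 in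
    (\<Sum>i\<in>{1..P}. h i *
      (\<Sum>m'<M div d_f. (1 / complex_of_real (sqrt Mt)) *
         exp (- (2 * pi * \<i>) * complex_of_real (real m' * real d_f * (delay_idx M Df (tau i) - real_of_int l) / real M))) *
      (\<Sum>n'<N div d_t. (1 / complex_of_real (sqrt Nt)) *
         exp ((2 * pi * \<i>) * complex_of_real (real n' * real d_t * (doppler_idx N T (nu i) - real_of_int k) / real N)))))"

end

theory Submission
  imports Defs
begin

text \<open>Once a path's delay l_i and Doppler k_i are integers, each factor of its contribution
  is a normalized sum of roots of unity with an integer offset x (l - l_i, resp. k_i - k).
  Over all L samples it equals sqrt L for x = 0 and vanishes for 0 < |x| < L; over every d-th
  sample, normalized by sqrt (L/d^2), it is a sum of (L/d)-th roots of unity and again equals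
  sqrt L for x = 0, but vanishes only for 0 < |x| < L/d. The admissible delays and Dopplers,
  together with the window of (k, l), keep the offsets below M/d_f and N/d_t, so the two CSFs
  agree path by path.\<close>

lemma sum_exp_roots_of_unity:
  fixes a :: int and L :: nat
  assumes "L > 0"
  shows "(\<Sum>m<L. exp (2 * pi * \<i> * complex_of_real (real m * of_int a / real L)))
           = (if int L dvd a then of_nat L else 0)"
proof -
  define z where "z = exp (2 * pi * \<i> * complex_of_real (of_int a / real L))"
  have power_z: "exp (2 * pi * \<i> * complex_of_real (real m * of_int a / real L)) = z ^ m" for m
    unfolding z_def by (subst exp_of_nat_mult [symmetric]) (simp add: field_simps)
  have z_eq_1: "z = 1 \<longleftrightarrow> int L dvd a"
  proof
    assume "z = 1"
    then obtain n :: int where "2 * pi * (of_int a / real L) = 2 * pi * of_int n"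
      unfolding z_def exp_eq_1 by auto
    then have "of_int a = real L * of_int n"
      using assms by (simp add: field_simps)
    then have "a = int L * n"
      by (metis of_int_eq_iff of_int_mult of_int_of_nat_eq)
    then show "int L dvd a" by simp
  next
    assume "int L dvd a"
    then obtain n where "a = int L * n" by auto
    then have "2 * pi * \<i> * complex_of_real (of_int a / real L) = 2 * pi * of_int n * \<i>"
      using assms by simp
    then show "z = 1"
      unfolding z_def by (simp add: exp_eq_1)
  qed
  have "z ^ L = 1"
    unfolding power_z [symmetric] using assms by (simp add: exp_eq_1)
  then show ?thesis
    unfolding power_z using z_eq_1 by (auto simp: sum_gp_strict)
qed

lemma sum_exp_roots_of_unity_small_offset:
  fixes x :: real and L :: nat
  assumes "L > 0" "x \<in> \<int>" "\<bar>x\<bar> < real L"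
  shows "(\<Sum>m<L. exp (2 * pi * \<i> * complex_of_real (real m * x / real L)))
           = (if x = 0 then of_nat L else 0)"
proof -
  obtain a where x: "x = of_int a"
    using assms(2) by (rule Ints_cases)
  have "\<bar>a\<bar> < int L"
    using assms(3) unfolding x by (metis of_int_abs of_int_less_iff of_int_of_nat_eq)
  then have "int L dvd a \<longleftrightarrow> a = 0"
    using dvd_imp_le_int [of a "int L"] by auto
  then show ?thesis
    unfolding x sum_exp_roots_of_unity [OF assms(1)] by simp
qed

lemma normalized_sum_exp_roots_of_unity:
  fixes x :: real and L :: nat
  assumes "L > 0" "x \<in> \<int>" "\<bar>x\<bar> < real L"
  shows "(\<Sum>m<L. 1 / complex_of_real (sqrt (real L)) *
            exp (2 * pi * \<i> * complex_of_real (real m * x / real L)))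
           = (if x = 0 then complex_of_real (sqrt (real L)) else 0)"
proof -
  have "1 / sqrt (real L) * real L = sqrt (real L)"
    using assms(1) by (simp add: field_simps)
  then have "1 / complex_of_real (sqrt (real L)) * of_nat L = complex_of_real (sqrt (real L))"
    by (metis of_real_divide of_real_mult of_real_1 of_real_of_nat_eq)
  then show ?thesis
    unfolding sum_distrib_left [symmetric] sum_exp_roots_of_unity_small_offset [OF assms] by simp
qed

lemma decimated_sum_exp_roots_of_unity:
  fixes x :: real and L d :: nat
  assumes "L > 0" "d dvd L" "x \<in> \<int>" "\<bar>x\<bar> < real (L div d)"
  shows "(\<Sum>m<L div d. 1 / complex_of_real (sqrt (real L / (real d)\<^sup>2)) *
            exp (2 * pi * \<i> * complex_of_real (real m * real d * x / real L)))
           = (if x = 0 then complex_of_real (sqrt (real L)) else 0)"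
proof -
  define K where "K = L div d"
  have L: "L = d * K" and "d > 0" "K > 0"
    using assms(1,2) unfolding K_def by auto
  have frequency: "real m * real d * x / real L = real m * x / real K" for m
    using L \<open>d > 0\<close> by (simp add: field_simps)
  have "real d / sqrt (real L) * real K = sqrt (real L)"
    using L \<open>d > 0\<close> \<open>K > 0\<close> by (simp add: field_simps real_sqrt_mult)
  then have "1 / sqrt (real L / (real d)\<^sup>2) * real K = sqrt (real L)"
    using \<open>d > 0\<close> by (simp add: real_sqrt_divide)
  then have scale: "1 / complex_of_real (sqrt (real L / (real d)\<^sup>2)) * of_nat K
                      = complex_of_real (sqrt (real L))"
    by (metis of_real_divide of_real_mult of_real_1 of_real_of_nat_eq)
  show ?thesis
    unfolding frequency sum_distrib_left [symmetric] K_def [symmetric]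
      sum_exp_roots_of_unity_small_offset [OF \<open>K > 0\<close> assms(3) assms(4) [folded K_def]]
    using scale by simp
qed

lemma decimated_sum_exp_eq_full_sum:
  fixes x :: real and L d :: nat
  assumes "L > 0" "d dvd L" "x \<in> \<int>" "\<bar>x\<bar> < real (L div d)"
  shows "(\<Sum>m<L div d. 1 / complex_of_real (sqrt (real L / (real d)\<^sup>2)) *
            exp (2 * pi * \<i> * complex_of_real (real m * real d * x / real L)))
       = (\<Sum>m<L. 1 / complex_of_real (sqrt (real L)) *
            exp (2 * pi * \<i> * complex_of_real (real m * x / real L)))"
proof -
  have x_small: "\<bar>x\<bar> < real L"
    using assms(4) div_le_dividend [of L d] by linarith
  show ?thesis
    unfolding decimated_sum_exp_roots_of_unity [OF assms]
      normalized_sum_exp_roots_of_unity [OF assms(1,3) x_small] ..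
qed

lemma decimated_sum_exp_eq_full_sum_conj:
  fixes x :: real and L d :: nat
  assumes "L > 0" "d dvd L" "x \<in> \<int>" "\<bar>x\<bar> < real (L div d)"
  shows "(\<Sum>m<L div d. 1 / complex_of_real (sqrt (real L / (real d)\<^sup>2)) *
            exp (- (2 * pi * \<i>) * complex_of_real (real m * real d * x / real L)))
       = (\<Sum>m<L. 1 / complex_of_real (sqrt (real L)) *
            exp (- (2 * pi * \<i>) * complex_of_real (real m * x / real L)))"
  using decimated_sum_exp_eq_full_sum [of L d "- x"] assms by simp

lemma delay_idx_range:
  assumes "M > 0" "Df > 0" "d_f dvd M" "0 \<le> tau" "tau \<le> 1 / (real d_f * Df) - 1 / (real M * Df)"
  shows "0 \<le> delay_idx M Df tau" "delay_idx M Df tau \<le> real (M div d_f) - 1"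
proof -
  obtain K where M: "M = d_f * K"
    using assms(3) by auto
  with assms(1) have "d_f > 0"
    by simp
  have "real M * Df * tau \<le> real M * Df * (1 / (real d_f * Df) - 1 / (real M * Df))"
    using assms by (intro mult_left_mono) auto
  also have "\<dots> = real (M div d_f) - 1"
    using M \<open>d_f > 0\<close> assms(1,2) by (simp add: field_simps)
  finally show "delay_idx M Df tau \<le> real (M div d_f) - 1"
    unfolding delay_idx_def .
  show "0 \<le> delay_idx M Df tau"
    using assms unfolding delay_idx_def by simp
qed

lemma doppler_idx_range:
  assumes "N > 0" "T > 0" "D dvd N"
    and "- 1 / (real D * T) \<le> nu" "nu \<le> 1 / (real D * T) - 1 / (real N * T)"
  shows "- real (N div D) \<le> doppler_idx N T nu" "doppler_idx N T nu \<le> real (N div D) - 1"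
proof -
  obtain K where N: "N = D * K"
    using assms(3) by auto
  with assms(1) have "D > 0"
    by simp
  have "- real (N div D) = real N * T * (- 1 / (real D * T))"
    using N \<open>D > 0\<close> assms(2) by (simp add: field_simps)
  also have "\<dots> \<le> real N * T * nu"
    using assms by (intro mult_left_mono) auto
  finally show "- real (N div D) \<le> doppler_idx N T nu"
    unfolding doppler_idx_def .
  have "real N * T * nu \<le> real N * T * (1 / (real D * T) - 1 / (real N * T))"
    using assms by (intro mult_left_mono) auto
  also have "\<dots> = real (N div D) - 1"
    using N \<open>D > 0\<close> assms(1,2) by (simp add: field_simps)
  finally show "doppler_idx N T nu \<le> real (N div D) - 1"
    unfolding doppler_idx_def .
qed

lemma hDD_periodic_eq_hDD_if_offsets_small:
  assumes "M > 0" "N > 0" "d_f dvd M" "d_t dvd N"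
    and "\<And>i. i \<in> {1..P} \<Longrightarrow> delay_idx M Df (tau i) - of_int l \<in> \<int> \<and>
                             \<bar>delay_idx M Df (tau i) - of_int l\<bar> < real (M div d_f)"
    and "\<And>i. i \<in> {1..P} \<Longrightarrow> doppler_idx N T (nu i) - of_int k \<in> \<int> \<and>
                             \<bar>doppler_idx N T (nu i) - of_int k\<bar> < real (N div d_t)"
  shows "hDD_periodic M N d_f d_t Df T P h tau nu k l = hDD M N Df T P h tau nu k l"
  unfolding hDD_periodic_def hDD_def Let_def
  using assms
  by (intro sum.cong refl)
    (simp only: decimated_sum_exp_eq_full_sum decimated_sum_exp_eq_full_sum_conj)

theorem theorem1:
  fixes M N d_f d_t P :: nat and T Df :: real
    and h :: "nat \<Rightarrow> complex" and tau nu :: "nat \<Rightarrow> real"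
  assumes "M > 0" "N > 0" "d_f > 0" "d_t > 0"
    and "d_f dvd M" "d_t dvd N" "(2 * d_t) dvd N"
    and "T > 0" "Df > 0"
    and "\<forall>i\<in>{1..P}. tau i \<ge> 0"
    and "\<forall>i\<in>{1..P}. delay_idx M Df (tau i) \<in> \<int> \<and> doppler_idx N T (nu i) \<in> \<int>"
    and "\<forall>i\<in>{1..P}. - 1 / (2 * real d_t * T) \<le> nu i \<and>
                      nu i \<le> 1 / (2 * real d_t * T) - 1 / (real N * T)"
    and "\<forall>i\<in>{1..P}. 0 \<le> tau i \<and> tau i \<le> 1 / (real d_f * Df) - 1 / (real M * Df)"
  shows "\<forall>k l. - int (N div (2 * d_t)) \<le> k \<and> k \<le> int (N div (2 * d_t)) - 1 \<and>
                0 \<le> l \<and> l \<le> int (M div d_f) - 1 \<longrightarrow>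
           hDD_periodic M N d_f d_t Df T P h tau nu k l = hDD M N Df T P h tau nu k l"
proof (intro allI impI)
  fix k l :: int
  assume window: "- int (N div (2 * d_t)) \<le> k \<and> k \<le> int (N div (2 * d_t)) - 1 \<and>
                  0 \<le> l \<and> l \<le> int (M div d_f) - 1"
  have half_period: "N div d_t = 2 * (N div (2 * d_t))"
    using assms(4,7) by (auto elim!: dvdE)
  show "hDD_periodic M N d_f d_t Df T P h tau nu k l = hDD M N Df T P h tau nu k l"
  proof (rule hDD_periodic_eq_hDD_if_offsets_small [OF assms(1,2,5,6)])
    fix i assume i: "i \<in> {1..P}"
    show "delay_idx M Df (tau i) - of_int l \<in> \<int> \<and>
          \<bar>delay_idx M Df (tau i) - of_int l\<bar> < real (M div d_f)"
      using delay_idx_range [of M Df d_f "tau i"] assms(1,5,9,11,13) i window by auto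
    show "doppler_idx N T (nu i) - of_int k \<in> \<int> \<and>
          \<bar>doppler_idx N T (nu i) - of_int k\<bar> < real (N div d_t)"
      using doppler_idx_range [of N T "2 * d_t" "nu i"] assms(2,7,8,11,12) i window
      unfolding half_period by auto
  qed
qed

end
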